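(* Let $\mathcal{A}$ be a finite set of positive integers, let $w \leqslant z$ be real numbers, and let $m_1, m_2, m_3, m_4$ be real numbers with $(m_1, m_2) \in \mathcal{U}$ and $(m_3, m_4) \in \mathcal{U}$. Writing $M^r_4 = \sum_{1 \leqslant i_1 < \cdots < i_r \leqslant 4} m_{i_1}\cdots m_{i_r}$ and $P = m_1m_2m_3m_4$, we have $$ S(\mathcal{A}, z) \leqslant S(\mathcal{A}, w) - \frac{M^3_4 - M^2_4 + M^1_4 - 1}{P} \sum_{w \leqslant p_1 < z} S(\mathcal{A}_{p_1}, w) + \frac{2(M^2_4 - 3M^1_4 + 7)}{P} \sum_{w \leqslant p_2 < p_1 < z} S(\mathcal{A}_{p_1p_2}, w) $$ $$ - \frac{6(M^1_4 - 6)}{P} \sum_{w \leqslant p_3 < p_2 < p_1 < z} S(\mathcal{A}_{p_1p_2p_3}, w) + \frac{24}{P} \sum_{w \leqslant p_4 < p_3 < p_2 < p_1 < z} S(\mathcal{A}_{p_1p_2p_3p_4}, w). $$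
   Context: Throughout, $p, p_1, p_2, \dots$ denote prime numbers. For a finite set $\mathcal{A}$ of positive integers and a positive integer $d$, $\mathcal{A}_d = \{a : ad \in \mathcal{A}\}$. For real $z$, $S(\mathcal{A}, z)$ denotes the number of $a \in \mathcal{A}$ having no prime factor less than $z$. Let $T = (0,1] \cup [2,3] \cup [4,5] \cup \cdots$, i.e. $T$ is the union of $(0,1]$ and the intervals $[k-1,k]$ over all odd integers $k \geqslant 3$, and let $\mathcal{U} = \{(x_1, x_2) : x_1, x_2 \in T,\ |x_1 - x_2| \leqslant 1\}$. *)

theory Defs
  imports "HOL-Computational_Algebra.Primes" Complex_Main
begin

definition Adiv :: "nat set \<Rightarrow> nat \<Rightarrow> nat set" where
  "Adiv A d = {a. a * d \<in> A}"

definition sieveS :: "nat set \<Rightarrow> real \<Rightarrow> nat" where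
  "sieveS A z = card {a \<in> A. \<forall>p. prime p \<and> p dvd a \<longrightarrow> \<not> (real p < z)}"

definition primes_in :: "real \<Rightarrow> real \<Rightarrow> nat set" where
  "primes_in w z = {p. prime p \<and> w \<le> real p \<and> real p < z}"

definition Tset :: "real set" where
  "Tset = {x. (0 < x \<and> x \<le> 1) \<or> (\<exists>k::nat. odd k \<and> 3 \<le> k \<and> real k - 1 \<le> x \<and> x \<le> real k)}"

definition Uset :: "(real \<times> real) set" where
  "Uset = {(x1, x2). x1 \<in> Tset \<and> x2 \<in> Tset \<and> \<bar>x1 - x2\<bar> \<le> 1}"

definition M1 :: "real \<Rightarrow> real \<Rightarrow> real \<Rightarrow> real \<Rightarrow> real" where
  "M1 a b c d = a + b + c + d"
definition M2 :: "real \<Rightarrow> real \<Rightarrow> real \<Rightarrow> real \<Rightarrow> real" where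
  "M2 a b c d = a*b + a*c + a*d + b*c + b*d + c*d"
definition M3 :: "real \<Rightarrow> real \<Rightarrow> real \<Rightarrow> real \<Rightarrow> real" where
  "M3 a b c d = a*b*c + a*b*d + a*c*d + b*c*d"

end

theory Submission
  imports Defs
begin

(* For a \<in> A without prime factors below w let n(a) be the number of primes in [w, z) dividing a.
   The k-fold sum of S(A_{p\<^sub>1\<cdots>p\<^sub>k}, w) over w \<le> p\<^sub>k < \<dots> < p\<^sub>1 < z counts each such a exactly
   (n(a) choose k) times, so the right-hand side is the sum over these a of a weight
   W(n(a)) = 1 - c\<^sub>1 (n(a) choose 1) + \<dots> + c\<^sub>4 (n(a) choose 4), and the coefficients are chosen so that
   W(n) = (m\<^sub>1 - n)(m\<^sub>2 - n)(m\<^sub>3 - n)(m\<^sub>4 - n) / (m\<^sub>1 m\<^sub>2 m\<^sub>3 m\<^sub>4). The left-hand side counts the a with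
   n(a) = 0, where W = 1. For n \<ge> 1 the weight is nonnegative because no integer lies strictly
   between two points of T at distance at most 1: an integer just above a point of T is odd,
   one just below a point of T is even. *)

lemma sum_card_less_choose:
  fixes Q :: "'a::linorder set"
  assumes "finite Q"
  shows "(\<Sum>x\<in>Q. card {q\<in>Q. q < x} choose k) = card Q choose Suc k"
  using assms
proof (induction Q rule: finite_linorder_max_induct)
  case empty
  then show ?case by simp
next
  case (insert b Q)
  have "b \<notin> Q" and "{q\<in>insert b Q. q < b} = Q"
    using insert by auto
  moreover have "{q\<in>insert b Q. q < x} = {q\<in>Q. q < x}" if "x \<in> Q" for x
    using insert that by auto
  ultimately have "(\<Sum>x\<in>insert b Q. card {q\<in>insert b Q. q < x} choose k)
      = (card Q choose k) + (\<Sum>x\<in>Q. card {q\<in>Q. q < x} choose k)"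
    using insert.hyps(1) by simp
  then show ?case
    using insert \<open>b \<notin> Q\<close> by simp
qed

definition rough :: "real \<Rightarrow> nat \<Rightarrow> bool" where
  "rough w a \<longleftrightarrow> (\<forall>p. prime p \<longrightarrow> p dvd a \<longrightarrow> w \<le> real p)"

lemma rough_1 [simp]: "rough w 1"
  unfolding rough_def by auto

lemma rough_prime: "prime p \<Longrightarrow> w \<le> real p \<Longrightarrow> rough w p"
  unfolding rough_def using primes_dvd_imp_eq by blast

lemma rough_mult_iff: "rough w (a * b) \<longleftrightarrow> rough w a \<and> rough w b"
  unfolding rough_def by (auto simp: prime_dvd_mult_iff)

lemma rough_mono: "rough x a \<Longrightarrow> w \<le> x \<Longrightarrow> rough w a"
  unfolding rough_def by (meson order_trans)

lemma mult_prime_dvd_iff: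
  fixes d p a :: nat
  assumes "prime p" and "\<not> p dvd d"
  shows "d * p dvd a \<longleftrightarrow> d dvd a \<and> p dvd a"
proof -
  have "coprime d p"
    using prime_imp_coprime[OF assms] coprime_commute by blast
  then show ?thesis
    by (meson divides_mult dvd_mult_left dvd_mult_right)
qed

lemma finite_primes_in [simp]: "finite (primes_in w z)"
proof (rule finite_subset)
  show "primes_in w z \<subseteq> {..nat \<lceil>z\<rceil>}"
    unfolding primes_in_def by (auto simp: le_nat_iff le_ceiling_iff)
qed simp

lemma primes_in_below_member:
  assumes "p \<in> primes_in w x"
  shows "primes_in w (real p) = {q\<in>primes_in w x. q < p}"
  using assms unfolding primes_in_def by auto

lemma sieveS_eq_card_rough: "sieveS A w = card {a\<in>A. rough w a}"
  unfolding sieveS_def rough_def by (simp add: not_less imp_conjL)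

lemma sieveS_eq_sum_rough:
  assumes "finite A" and "w \<le> z"
  shows "real (sieveS A z) = (\<Sum>a | a \<in> A \<and> rough w a. of_bool (card {p\<in>primes_in w z. p dvd a} = 0))"
proof -
  have "rough z a \<longleftrightarrow> rough w a \<and> {p\<in>primes_in w z. p dvd a} = {}" for a
    using assms(2) unfolding rough_def primes_in_def by (auto simp: not_less)
  then have "{a\<in>A. rough z a} = {a\<in>A. rough w a \<and> card {p\<in>primes_in w z. p dvd a} = 0}"
    by auto
  moreover have "{a\<in>A. rough w a} \<inter> {a. card {p\<in>primes_in w z. p dvd a} = 0}
      = {a\<in>A. rough w a \<and> card {p\<in>primes_in w z. p dvd a} = 0}"
    by auto
  ultimately show ?thesis
    using assms(1) by (simp add: sieveS_eq_card_rough)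
qed

lemma sieveS_Adiv_eq_sum:
  assumes "finite A" and "0 < d" and "rough w d"
  shows "real (sieveS (Adiv A d) w) = (\<Sum>a | a \<in> A \<and> rough w a. of_bool (d dvd a))"
proof -
  have "(\<lambda>b. b * d) ` {b\<in>Adiv A d. rough w b} = {a\<in>A. rough w a \<and> d dvd a}"
  proof (intro equalityI subsetI)
    fix a assume a: "a \<in> {a\<in>A. rough w a \<and> d dvd a}"
    then have "a = a div d * d" by simp
    moreover have "a div d \<in> {b\<in>Adiv A d. rough w b}"
      using a \<open>a = a div d * d\<close> rough_mult_iff[of w "a div d" d] unfolding Adiv_def by auto
    ultimately show "a \<in> (\<lambda>b. b * d) ` {b\<in>Adiv A d. rough w b}" by blast
  qed (use assms(3) in \<open>auto simp: Adiv_def rough_mult_iff\<close>)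
  moreover have "inj_on (\<lambda>b. b * d) {b\<in>Adiv A d. rough w b}"
    using assms(2) by (auto intro: inj_onI)
  ultimately have "sieveS (Adiv A d) w = card {a\<in>A. rough w a \<and> d dvd a}"
    unfolding sieveS_eq_card_rough by (metis card_image)
  moreover have "{a\<in>A. rough w a} \<inter> {a. d dvd a} = {a\<in>A. rough w a \<and> d dvd a}"
    by auto
  ultimately show ?thesis
    using assms(1) by simp
qed

(* prime_chain_sum w g k x d is the sum of g (d p\<^sub>1 \<cdots> p\<^sub>k) over primes w \<le> p\<^sub>k < \<dots> < p\<^sub>1 < x;
   with d = 1 and g d = S(A_d, w) these are the sums in the theorem. *)
fun prime_chain_sum :: "real \<Rightarrow> (nat \<Rightarrow> real) \<Rightarrow> nat \<Rightarrow> real \<Rightarrow> nat \<Rightarrow> real" where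
  "prime_chain_sum w g 0 x d = g d"
| "prime_chain_sum w g (Suc k) x d = (\<Sum>p\<in>primes_in w x. prime_chain_sum w g k (real p) (d * p))"

lemma prime_chain_sum_dvd:
  assumes "rough x d"
  shows "prime_chain_sum w (\<lambda>d. of_bool (d dvd a)) k x d
       = of_bool (d dvd a) * real (card {p\<in>primes_in w x. p dvd a} choose k)"
  using assms
proof (induction k arbitrary: x d)
  case 0
  then show ?case by simp
next
  case (Suc k)
  define Q where "Q = {p\<in>primes_in w x. p dvd a}"
  have step: "prime_chain_sum w (\<lambda>d. of_bool (d dvd a)) k (real p) (d * p)
      = of_bool (d dvd a) * (of_bool (p dvd a) * real (card {q\<in>Q. q < p} choose k))"
    if p: "p \<in> primes_in w x" for p
  proof -
    have "prime p" "real p < x"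
      using p unfolding primes_in_def by auto
    have "\<not> p dvd d"
      using Suc.prems \<open>prime p\<close> \<open>real p < x\<close> unfolding rough_def by (meson leD)
    have "rough (real p) (d * p)"
      using rough_mono[OF Suc.prems, of "real p"] rough_prime[OF \<open>prime p\<close>, of "real p"] \<open>real p < x\<close>
      by (simp add: rough_mult_iff)
    then have "prime_chain_sum w (\<lambda>d. of_bool (d dvd a)) k (real p) (d * p)
        = of_bool (d * p dvd a) * real (card {q\<in>primes_in w (real p). q dvd a} choose k)"
      by (intro Suc.IH)
    moreover have "{q\<in>primes_in w (real p). q dvd a} = {q\<in>Q. q < p}"
      using primes_in_below_member[OF p] unfolding Q_def by auto
    ultimately show ?thesis
      using mult_prime_dvd_iff[OF \<open>prime p\<close> \<open>\<not> p dvd d\<close>] by simp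
  qed
  have "finite Q"
    unfolding Q_def by simp
  have "prime_chain_sum w (\<lambda>d. of_bool (d dvd a)) (Suc k) x d
      = of_bool (d dvd a) * (\<Sum>p\<in>primes_in w x. of_bool (p dvd a) * real (card {q\<in>Q. q < p} choose k))"
    using step by (simp add: sum_distrib_left)
  also have "(\<Sum>p\<in>primes_in w x. of_bool (p dvd a) * real (card {q\<in>Q. q < p} choose k))
      = (\<Sum>p\<in>Q. real (card {q\<in>Q. q < p} choose k))"
    unfolding Q_def by (simp add: Int_def)
  also have "\<dots> = real (card Q choose Suc k)"
    using sum_card_less_choose[OF \<open>finite Q\<close>] by (metis of_nat_sum)
  finally show ?case
    unfolding Q_def .
qed

lemma prime_chain_sum_sieveS:
  assumes "finite A" and "0 < d" and "rough w d"
  shows "prime_chain_sum w (\<lambda>d. real (sieveS (Adiv A d) w)) k x d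
       = (\<Sum>a | a \<in> A \<and> rough w a. prime_chain_sum w (\<lambda>d. of_bool (d dvd a)) k x d)"
  using assms(2,3)
proof (induction k arbitrary: x d)
  case 0
  then show ?case using sieveS_Adiv_eq_sum[OF assms(1)] by simp
next
  case (Suc k)
  have "prime_chain_sum w (\<lambda>d. real (sieveS (Adiv A d) w)) k (real p) (d * p)
      = (\<Sum>a | a \<in> A \<and> rough w a. prime_chain_sum w (\<lambda>d. of_bool (d dvd a)) k (real p) (d * p))"
    if "p \<in> primes_in w x" for p
  proof -
    have "prime p" "w \<le> real p"
      using that unfolding primes_in_def by auto
    then have "0 < d * p" "rough w (d * p)"
      using Suc.prems by (simp_all add: rough_mult_iff rough_prime prime_gt_0_nat)
    then show ?thesis
      by (rule Suc.IH)
  qed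
  then have "prime_chain_sum w (\<lambda>d. real (sieveS (Adiv A d) w)) (Suc k) x d
      = (\<Sum>p\<in>primes_in w x. \<Sum>a | a \<in> A \<and> rough w a.
           prime_chain_sum w (\<lambda>d. of_bool (d dvd a)) k (real p) (d * p))"
    by simp
  also have "\<dots> = (\<Sum>a | a \<in> A \<and> rough w a. \<Sum>p\<in>primes_in w x.
           prime_chain_sum w (\<lambda>d. of_bool (d dvd a)) k (real p) (d * p))"
    by (rule sum.swap)
  finally show ?case
    by simp
qed

lemma prime_chain_sum_sieveS_choose:
  assumes "finite A"
  shows "prime_chain_sum w (\<lambda>d. real (sieveS (Adiv A d) w)) k z 1
       = (\<Sum>a | a \<in> A \<and> rough w a. real (card {p\<in>primes_in w z. p dvd a} choose k))"
proof -
  have "prime_chain_sum w (\<lambda>d. of_bool (d dvd a)) k z 1 = real (card {p\<in>primes_in w z. p dvd a} choose k)"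
    for a
    using prime_chain_sum_dvd[OF rough_1] by simp
  then show ?thesis
    using prime_chain_sum_sieveS[OF assms zero_less_one rough_1] by simp
qed

lemma nat_eq_if_real_dist_less_1:
  assumes "real k < real n + 1" and "real n < real k + 1"
  shows "n = k"
proof -
  have "k < n + 1" "n < k + 1"
    using assms by (simp_all only: of_nat_1 flip: of_nat_add of_nat_less_iff)
  then show ?thesis by simp
qed

lemma Tset_pos: "x \<in> Tset \<Longrightarrow> 0 < x"
  unfolding Tset_def by auto

lemma Tset_odd_above:
  assumes "x \<in> Tset" and "x < real n" and "real n < x + 1"
  shows "odd n"
proof -
  from assms(1) consider "0 < x" "x \<le> 1" | k where "odd k" "real k - 1 \<le> x" "x \<le> real k"
    unfolding Tset_def by auto
  then show ?thesis
  proof cases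
    case 1
    then have "n = 1"
      using assms(2,3) by (intro nat_eq_if_real_dist_less_1) simp_all
    then show ?thesis by simp
  next
    case 2
    then have "n = k"
      using assms(2,3) by (intro nat_eq_if_real_dist_less_1) simp_all
    with 2 show ?thesis by simp
  qed
qed

lemma Tset_even_below:
  assumes "y \<in> Tset" and "y - 1 < real n" and "real n < y"
  shows "even n"
proof -
  from assms(1) consider "0 < y" "y \<le> 1" | k where "odd k" "3 \<le> k" "real k - 1 \<le> y" "y \<le> real k"
    unfolding Tset_def by auto
  then show ?thesis
  proof cases
    case 1
    then have "n = 0"
      using assms(2,3) by (intro nat_eq_if_real_dist_less_1) simp_all
    then show ?thesis by simp
  next
    case 2
    then have "n = k - 1"
      using assms(2,3) by (intro nat_eq_if_real_dist_less_1) simp_all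
    with 2 show ?thesis by simp
  qed
qed

lemma Tset_no_integer_between:
  assumes "x \<in> Tset" and "y \<in> Tset" and "y - x \<le> 1" and "x < real n" and "real n < y"
  shows False
proof -
  have "odd n"
    using assms by (intro Tset_odd_above[OF assms(1)]) simp_all
  moreover have "even n"
    using assms by (intro Tset_even_below[OF assms(2)]) simp_all
  ultimately show False by simp
qed

lemma Uset_mult_nonneg:
  assumes "(x1, x2) \<in> Uset"
  shows "0 \<le> (x1 - real n) * (x2 - real n)"
proof (rule ccontr)
  assume "\<not> 0 \<le> (x1 - real n) * (x2 - real n)"
  then have "x1 < real n \<and> real n < x2 \<or> x2 < real n \<and> real n < x1"
    by (auto simp: mult_less_0_iff not_le)
  then show False
    using assms Tset_no_integer_between[of x1 x2 n] Tset_no_integer_between[of x2 x1 n]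
    unfolding Uset_def by auto
qed

lemma choose_combination_eq_prod:
  fixes m1 m2 m3 m4 :: real
  assumes "m1*m2*m3*m4 \<noteq> 0"
  shows "1 - (M3 m1 m2 m3 m4 - M2 m1 m2 m3 m4 + M1 m1 m2 m3 m4 - 1) / (m1*m2*m3*m4) * real (n choose 1)
      + 2 * (M2 m1 m2 m3 m4 - 3 * M1 m1 m2 m3 m4 + 7) / (m1*m2*m3*m4) * real (n choose 2)
      - 6 * (M1 m1 m2 m3 m4 - 6) / (m1*m2*m3*m4) * real (n choose 3)
      + 24 / (m1*m2*m3*m4) * real (n choose 4)
    = (m1 - real n) * (m2 - real n) * (m3 - real n) * (m4 - real n) / (m1*m2*m3*m4)"
  using assms unfolding binomial_gbinomial gbinomial_prod_rev M1_def M2_def M3_def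
  by (simp add: eval_nat_numeral atLeast0LessThan lessThan_Suc field_simps)

lemma indicator_zero_le_choose_combination:
  assumes "(m1, m2) \<in> Uset" and "(m3, m4) \<in> Uset"
  shows "of_bool (n = 0) \<le> 1 - (M3 m1 m2 m3 m4 - M2 m1 m2 m3 m4 + M1 m1 m2 m3 m4 - 1) / (m1*m2*m3*m4) * real (n choose 1)
      + 2 * (M2 m1 m2 m3 m4 - 3 * M1 m1 m2 m3 m4 + 7) / (m1*m2*m3*m4) * real (n choose 2)
      - 6 * (M1 m1 m2 m3 m4 - 6) / (m1*m2*m3*m4) * real (n choose 3)
      + 24 / (m1*m2*m3*m4) * real (n choose 4)"
proof -
  have pos: "0 < m1" "0 < m2" "0 < m3" "0 < m4"
    using assms Tset_pos unfolding Uset_def by auto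
  then have P: "0 < m1*m2*m3*m4"
    by simp
  have "0 \<le> (m1 - real n) * (m2 - real n) * ((m3 - real n) * (m4 - real n))"
    using Uset_mult_nonneg[OF assms(1)] Uset_mult_nonneg[OF assms(2)] by simp
  then have "of_bool (n = 0) \<le> (m1 - real n) * (m2 - real n) * (m3 - real n) * (m4 - real n) / (m1*m2*m3*m4)"
    using P pos by (cases "n = 0") (simp_all add: mult.assoc)
  then show ?thesis
    using P by (subst choose_combination_eq_prod) auto
qed

theorem theorem3:
  fixes A :: "nat set" and w z m1 m2 m3 m4 :: real
  assumes "finite A" and "0 \<notin> A" and "w \<le> z"
    and "(m1, m2) \<in> Uset" and "(m3, m4) \<in> Uset"
  shows "real (sieveS A z) \<le>
      real (sieveS A w)
    - (M3 m1 m2 m3 m4 - M2 m1 m2 m3 m4 + M1 m1 m2 m3 m4 - 1) / (m1*m2*m3*m4)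
        * (\<Sum>p1\<in>primes_in w z. real (sieveS (Adiv A p1) w))
    + 2 * (M2 m1 m2 m3 m4 - 3 * M1 m1 m2 m3 m4 + 7) / (m1*m2*m3*m4)
        * (\<Sum>p1\<in>primes_in w z. \<Sum>p2\<in>primes_in w (real p1).
             real (sieveS (Adiv A (p1*p2)) w))
    - 6 * (M1 m1 m2 m3 m4 - 6) / (m1*m2*m3*m4)
        * (\<Sum>p1\<in>primes_in w z. \<Sum>p2\<in>primes_in w (real p1). \<Sum>p3\<in>primes_in w (real p2).
             real (sieveS (Adiv A (p1*p2*p3)) w))
    + 24 / (m1*m2*m3*m4)
        * (\<Sum>p1\<in>primes_in w z. \<Sum>p2\<in>primes_in w (real p1). \<Sum>p3\<in>primes_in w (real p2).
             \<Sum>p4\<in>primes_in w (real p3).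
             real (sieveS (Adiv A (p1*p2*p3*p4)) w))"
proof -
  let ?R = "{a. a \<in> A \<and> rough w a}"
  let ?c1 = "(M3 m1 m2 m3 m4 - M2 m1 m2 m3 m4 + M1 m1 m2 m3 m4 - 1) / (m1*m2*m3*m4)"
  let ?c2 = "2 * (M2 m1 m2 m3 m4 - 3 * M1 m1 m2 m3 m4 + 7) / (m1*m2*m3*m4)"
  let ?c3 = "6 * (M1 m1 m2 m3 m4 - 6) / (m1*m2*m3*m4)"
  let ?c4 = "24 / (m1*m2*m3*m4)"
  define n where "n a = card {p\<in>primes_in w z. p dvd a}" for a
  have chain: "(\<Sum>a\<in>?R. real (n a choose k)) = prime_chain_sum w (\<lambda>d. real (sieveS (Adiv A d) w)) k z 1" for k
    unfolding n_def using prime_chain_sum_sieveS_choose[OF assms(1)] by simp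
  have "real (sieveS A z) = (\<Sum>a\<in>?R. of_bool (n a = 0))"
    unfolding n_def using sieveS_eq_sum_rough[OF assms(1,3)] .
  also have "\<dots> \<le> (\<Sum>a\<in>?R. 1 - ?c1 * real (n a choose 1) + ?c2 * real (n a choose 2)
      - ?c3 * real (n a choose 3) + ?c4 * real (n a choose 4))"
    by (intro sum_mono indicator_zero_le_choose_combination assms(4,5))
  also have "\<dots> = (\<Sum>a\<in>?R. real (n a choose 0)) - ?c1 * (\<Sum>a\<in>?R. real (n a choose 1))
      + ?c2 * (\<Sum>a\<in>?R. real (n a choose 2)) - ?c3 * (\<Sum>a\<in>?R. real (n a choose 3))
      + ?c4 * (\<Sum>a\<in>?R. real (n a choose 4))"
    by (simp add: sum.distrib sum_subtractf sum_distrib_left)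
  (* For k = 0 the chain sum is S(A_1, w) = S(A, w). *)
  finally show ?thesis
    unfolding chain by (simp add: numeral_eq_Suc Adiv_def)
qed

end
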